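(* Let $X$ be a finite set, $H$ a Hilbert space, and $E=(E_{x,x',a,a'})_{x,x',a,a'\in X}\in M_X\otimes M_X\otimes\mathcal B(H)$ a stochastic operator matrix. Then there exist a Hilbert space $K$, an isometry $W:H\to K$ and a block operator unitary $U=(U_{a,x})_{a,x\in X}\in M_X\otimes\mathcal B(K)$ such that $E_{x,x',a,a'}=W^*U_{a,x}^*U_{a',x'}W$ for all $x,x',a,a'\in X$.
   Context: A stochastic operator matrix over $(X,X)$ acting on $H$ is a positive block operator matrix $E=(E_{x,x',a,a'})$, with $E_{x,x',a,a'}\in\mathcal B(H)$, viewed in $M_X\otimes M_X\otimes\mathcal B(H)$ (first $M_X$ indexed by $x,x'$, second by $a,a'$), such that $\sum_{a\in X}E_{x,x',a,a}=\delta_{x,x'}I_H$ for all $x,x'\in X$. A block operator unitary $(U_{a,x})$ is a unitary operator on $K^X=\oplus_{x\in X}K$ written in block form. *)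

theory Defs
  imports "HOL-Analysis.Analysis"
begin

text \<open>HOL-Analysis has no complex inner product spaces, so we introduce the standard
  notion. Convention: the inner product is conjugate-linear in the first argument.\<close>

class complex_inner = real_normed_vector +
  fixes scaleC :: "complex \<Rightarrow> 'a \<Rightarrow> 'a"
    and cinner :: "'a \<Rightarrow> 'a \<Rightarrow> complex"
  assumes scaleC_add_right: "scaleC c (x + y) = scaleC c x + scaleC c y"
    and scaleC_add_left: "scaleC (c + d) x = scaleC c x + scaleC d x"
    and scaleC_scaleC: "scaleC c (scaleC d x) = scaleC (c * d) x"
    and scaleC_one: "scaleC 1 x = x"
    and scaleR_scaleC: "scaleR r x = scaleC (complex_of_real r) x"
    and cinner_conj: "cinner x y = cnj (cinner y x)"
    and cinner_add_right: "cinner x (y + z) = cinner x y + cinner x z"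
    and cinner_scaleC_right: "cinner x (scaleC c y) = c * cinner x y"
    and cinner_Re_nonneg: "0 \<le> Re (cinner x x)"
    and norm_cinner: "norm x = sqrt (Re (cinner x x))"

class chilbert_space = complex_inner + complete_space

instantiation vec :: (complex_inner, finite) complex_inner
begin

definition scaleC_vec :: "complex \<Rightarrow> 'a ^ 'b \<Rightarrow> 'a ^ 'b"
  where "scaleC_vec c x = (\<chi> i. scaleC c (x $ i))"

definition cinner_vec :: "'a ^ 'b \<Rightarrow> 'a ^ 'b \<Rightarrow> complex"
  where "cinner_vec x y = (\<Sum>i\<in>UNIV. cinner (x $ i) (y $ i))"

instance
proof
  fix c d :: complex and r :: real and x y z :: "'a ^ 'b"
  show "scaleC c (x + y) = scaleC c x + scaleC c y"
    by (simp add: scaleC_vec_def vec_eq_iff scaleC_add_right)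
  show "scaleC (c + d) x = scaleC c x + scaleC d x"
    by (simp add: scaleC_vec_def vec_eq_iff scaleC_add_left)
  show "scaleC c (scaleC d x) = scaleC (c * d) x"
    by (simp add: scaleC_vec_def vec_eq_iff scaleC_scaleC)
  show "scaleC 1 x = x"
    by (simp add: scaleC_vec_def vec_eq_iff scaleC_one)
  show "scaleR r x = scaleC (complex_of_real r) x"
    by (simp add: scaleC_vec_def vec_eq_iff scaleR_scaleC)
  show "cinner x y = cnj (cinner y x)"
    by (simp add: cinner_vec_def cinner_conj[of "x $ i" "y $ i" for i])
  show "cinner x (y + z) = cinner x y + cinner x z"
    by (simp add: cinner_vec_def cinner_add_right sum.distrib)
  show "cinner x (scaleC c y) = c * cinner x y"
    by (simp add: cinner_vec_def scaleC_vec_def cinner_scaleC_right sum_distrib_left)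
  show "0 \<le> Re (cinner x x)"
    by (simp add: cinner_vec_def sum_nonneg cinner_Re_nonneg)
  have "\<And>i. (norm (x $ i))\<^sup>2 = Re (cinner (x $ i) (x $ i))"
    by (simp add: norm_cinner cinner_Re_nonneg)
  then show "norm x = sqrt (Re (cinner x x))"
    by (simp add: norm_vec_def L2_set_def cinner_vec_def)
qed

end

instance vec :: (chilbert_space, finite) chilbert_space ..

definition clinear :: "('a::complex_inner \<Rightarrow> 'b::complex_inner) \<Rightarrow> bool" where
  "clinear f \<longleftrightarrow> (\<forall>x y. f (x + y) = f x + f y) \<and> (\<forall>c x. f (scaleC c x) = scaleC c (f x))"

definition bounded_clinear :: "('a::complex_inner \<Rightarrow> 'b::complex_inner) \<Rightarrow> bool" where
  "bounded_clinear f \<longleftrightarrow> clinear f \<and> (\<exists>C. \<forall>x. norm (f x) \<le> norm x * C)"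

definition is_cadjoint :: "('a::complex_inner \<Rightarrow> 'b::complex_inner) \<Rightarrow> ('b \<Rightarrow> 'a) \<Rightarrow> bool" where
  "is_cadjoint T S \<longleftrightarrow> (\<forall>x y. cinner (T x) y = cinner x (S y))"

text \<open>The Hilbert space adjoint \<open>T\<^sup>*\<close> (exists and is unique for bounded operators).\<close>
definition cadjoint :: "('a::complex_inner \<Rightarrow> 'b::complex_inner) \<Rightarrow> ('b \<Rightarrow> 'a)" where
  "cadjoint T = (SOME S. is_cadjoint T S)"

definition is_isometry :: "('a::complex_inner \<Rightarrow> 'b::complex_inner) \<Rightarrow> bool" where
  "is_isometry W \<longleftrightarrow> bounded_clinear W \<and> (\<forall>x. norm (W x) = norm x)"

definition is_unitary :: "('a::complex_inner \<Rightarrow> 'a) \<Rightarrow> bool" where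
  "is_unitary U \<longleftrightarrow> bounded_clinear U \<and>
     (\<exists>S. is_cadjoint U S \<and> S \<circ> U = id \<and> U \<circ> S = id)"

definition block_op :: "('x::finite \<Rightarrow> 'x \<Rightarrow> ('k::complex_inner \<Rightarrow> 'k)) \<Rightarrow> 'k ^ 'x \<Rightarrow> 'k ^ 'x" where
  "block_op U v = (\<chi> a. \<Sum>x\<in>UNIV. U a x (v $ x))"

definition block_unitary :: "('x::finite \<Rightarrow> 'x \<Rightarrow> ('k::complex_inner \<Rightarrow> 'k)) \<Rightarrow> bool" where
  "block_unitary U \<longleftrightarrow> (\<forall>a x. bounded_clinear (U a x)) \<and> is_unitary (block_op U)"

text \<open>Viewed in \<open>M_X \<otimes> M_X \<otimes> B(H)\<close>, it is the operator on
  \<open>\<C>^X \<otimes> \<C>^X \<otimes> H = H^(X\<times>X)\<close> whose \<open>((x,a),(x',a'))\<close> entry is \<open>E\<^sub>x\<^sub>,\<^sub>x\<^sub>'\<^sub>,\<^sub>a\<^sub>,\<^sub>a\<^sub>'\<close>;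
  positivity means \<open>\<langle>\<xi>, E \<xi>\<rangle> \<ge> 0\<close> for all \<open>\<xi>\<close>.\<close>
definition positive_block :: "('x::finite \<Rightarrow> 'x \<Rightarrow> 'x \<Rightarrow> 'x \<Rightarrow> ('h::complex_inner \<Rightarrow> 'h)) \<Rightarrow> bool" where
  "positive_block E \<longleftrightarrow> (\<forall>\<xi> :: 'x \<Rightarrow> 'x \<Rightarrow> 'h.
     (let q = (\<Sum>x\<in>UNIV. \<Sum>x'\<in>UNIV. \<Sum>a\<in>UNIV. \<Sum>a'\<in>UNIV.
                 cinner (\<xi> x a) (E x x' a a' (\<xi> x' a')))
      in Im q = 0 \<and> 0 \<le> Re q))"

definition stochastic_operator_matrix ::
  "('x::finite \<Rightarrow> 'x \<Rightarrow> 'x \<Rightarrow> 'x \<Rightarrow> ('h::complex_inner \<Rightarrow> 'h)) \<Rightarrow> bool" where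
  "stochastic_operator_matrix E \<longleftrightarrow>
     (\<forall>x x' a a'. bounded_clinear (E x x' a a')) \<and>
     positive_block E \<and>
     (\<forall>x x' h. (\<Sum>a\<in>UNIV. E x x' a a h) = (if x = x' then h else 0))"

end

theory Submission
  imports Defs
begin

text \<open>View \<open>E\<close> as a positive operator on \<open>H\<^sup>X\<^sup>\<times>\<^sup>X\<close> and take a hermitian square root \<open>R\<close>
  of it; after rescaling, \<open>R\<close> is the power series of \<open>1 - sqrt (1 - t)\<close>, whose coefficients
  are nonnegative with sum \<open>1\<close>, evaluated at a hermitian contraction.
  The map \<open>V w = (R (w \<otimes> e\<^sub>a))\<^sub>a\<close> from \<open>H\<^sup>X\<close> to \<open>(H\<^sup>X\<^sup>\<times>\<^sup>X)\<^sup>X\<close> is an isometry, because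
  \<open>V\<^sup>* V\<close> has entries \<open>\<Sum>\<^sub>a E\<^sub>x\<^sub>,\<^sub>x\<^sub>'\<^sub>,\<^sub>a\<^sub>,\<^sub>a = \<delta>\<^sub>x\<^sub>,\<^sub>x\<^sub>'\<close>, and the individual products
  \<open>(R (e\<^sub>x \<otimes> e\<^sub>a))\<^sup>* R (e\<^sub>x\<^sub>' \<otimes> e\<^sub>a\<^sub>')\<close> between its components are the entries \<open>E\<^sub>x\<^sub>,\<^sub>x\<^sub>'\<^sub>,\<^sub>a\<^sub>,\<^sub>a\<^sub>'\<close>.
  Halmos' dilation \<open>[[0, V\<^sup>*], [V, 1 - V V\<^sup>*]]\<close> of \<open>V\<close> is a unitary on
  \<open>H\<^sup>X \<oplus> (H\<^sup>X\<^sup>\<times>\<^sup>X)\<^sup>X = K\<^sup>X\<close> with \<open>K = H \<oplus> H\<^sup>X\<^sup>\<times>\<^sup>X\<close>. Its blocks are the \<open>U\<^sub>a\<^sub>,\<^sub>x\<close>, and with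
  \<open>W\<close> the inclusion of \<open>H\<close> as the first summand of \<open>K\<close>, \<open>W\<^sup>* U\<^sub>a\<^sub>,\<^sub>x\<^sup>* U\<^sub>a\<^sub>'\<^sub>,\<^sub>x\<^sub>' W\<close> only sees
  the corners \<open>V\<close> and \<open>V\<^sup>*\<close>.\<close>

lemma cinner_add_left: "cinner (x + y) z = cinner x z + cinner (y::'a::complex_inner) z"
  by (metis cinner_conj cinner_add_right complex_cnj_add)

lemma cinner_scaleC_left: "cinner (scaleC c x) y = cnj c * cinner (x::'a::complex_inner) y"
  by (metis cinner_conj cinner_scaleC_right complex_cnj_mult)

interpretation scaleC_right: additive "\<lambda>x. scaleC c x :: 'a::complex_inner"
  by standard (rule scaleC_add_right)

interpretation scaleC_left: additive "\<lambda>c. scaleC c x :: 'a::complex_inner"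
  by standard (rule scaleC_add_left)

interpretation cinner_right: additive "\<lambda>y. cinner (x::'a::complex_inner) y"
  by standard (rule cinner_add_right)

interpretation cinner_left: additive "\<lambda>x. cinner x (y::'a::complex_inner)"
  by standard (rule cinner_add_left)

declare scaleC_right.zero [simp] cinner_right.zero [simp] cinner_left.zero [simp]

lemma cinner_scaleR_right: "cinner x (r *\<^sub>R y) = complex_of_real r * cinner (x::'a::complex_inner) y"
  by (simp add: scaleR_scaleC cinner_scaleC_right)

lemma cinner_scaleR_left: "cinner (r *\<^sub>R x) y = complex_of_real r * cinner (x::'a::complex_inner) y"
  by (simp add: scaleR_scaleC cinner_scaleC_left)

lemma scaleC_scaleR_commute: "scaleC c (r *\<^sub>R x) = r *\<^sub>R scaleC c (x::'a::complex_inner)"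
  by (simp add: scaleR_scaleC scaleC_scaleC mult.commute)

lemma cinner_self: "cinner x x = complex_of_real ((norm (x::'a::complex_inner))\<^sup>2)"
proof -
  have "Im (cinner x x) = 0"
    using cinner_conj[of x x] by (simp add: complex_eq_iff)
  then show ?thesis
    by (simp add: complex_eq_iff norm_cinner cinner_Re_nonneg)
qed

lemma norm_sq_cinner: "(norm x)\<^sup>2 = Re (cinner x (x::'a::complex_inner))"
  by (simp add: cinner_self)

lemma cinner_self_eq_0 [simp]: "cinner x x = 0 \<longleftrightarrow> (x::'a::complex_inner) = 0"
  by (simp add: cinner_self)

lemma cinner_eqI: "(\<And>z. cinner z x = cinner z y) \<Longrightarrow> x = (y::'a::complex_inner)"
  by (metis cinner_self_eq_0 cinner_left.diff cinner_right.diff right_minus_eq)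

lemma norm_scaleC: "norm (scaleC c x) = cmod c * norm (x::'a::complex_inner)"
proof -
  have cc: "c * cnj c = complex_of_real ((cmod c)\<^sup>2)"
    by (rule complex_norm_square[symmetric])
  have "(norm (scaleC c x))\<^sup>2 = Re (c * (cnj c * cinner x x))"
    by (simp only: norm_sq_cinner cinner_scaleC_left cinner_scaleC_right)
  also have "\<dots> = Re (complex_of_real ((cmod c)\<^sup>2) * complex_of_real ((norm x)\<^sup>2))"
    by (simp only: mult.assoc[symmetric] cc cinner_self)
  also have "\<dots> = (cmod c * norm x)\<^sup>2"
    by (simp add: power_mult_distrib)
  finally show ?thesis
    by (simp add: power2_eq_iff_nonneg)
qed

section \<open>Bounded operators\<close>

lemma clinear_add: "clinear T \<Longrightarrow> T (x + y) = T x + T y"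
  and clinear_scaleC: "clinear T \<Longrightarrow> T (scaleC c x) = scaleC c (T x)"
  by (simp_all add: clinear_def)

lemma clinear_additive: "clinear T \<Longrightarrow> Modules.additive T"
  by unfold_locales (rule clinear_add)

lemmas clinear_zero = additive.zero[OF clinear_additive]
  and clinear_diff = additive.diff[OF clinear_additive]
  and clinear_sum = additive.sum[OF clinear_additive]

lemma clinear_scaleR: "clinear T \<Longrightarrow> T (r *\<^sub>R x) = r *\<^sub>R T x"
  by (simp add: scaleR_scaleC clinear_scaleC)

definition hermitian :: "('a::complex_inner \<Rightarrow> 'a) \<Rightarrow> bool" where
  "hermitian T \<longleftrightarrow> (\<forall>x y. cinner (T x) y = cinner x (T y))"

definition positive_op :: "('a::complex_inner \<Rightarrow> 'a) \<Rightarrow> bool" where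
  "positive_op T \<longleftrightarrow> (\<forall>x. 0 \<le> Re (cinner x (T x)))"

lemma hermitianD: "hermitian T \<Longrightarrow> cinner (T x) y = cinner x (T y)"
  by (simp add: hermitian_def)

lemma positive_opD: "positive_op T \<Longrightarrow> 0 \<le> Re (cinner x (T x))"
  by (simp add: positive_op_def)

lemma hermitian_is_cadjoint: "hermitian T \<Longrightarrow> is_cadjoint T T"
  by (simp add: hermitian_def is_cadjoint_def)

lemma hermitian_if_real_quadratic_form:
  assumes T: "clinear T" and real: "\<And>x. Im (cinner x (T x)) = 0"
  shows "hermitian T"
proof -
  define d where "d x y = cinner x (T y) - cinner (T x) y" for x y
  have diag: "d x x = 0" for x
    using cinner_conj[of "T x" x] real[of x] by (simp add: d_def complex_eq_iff)
  have "d (x + y) (x + y) = d x x + d x y + d y x + d y y" for x y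
    unfolding d_def by (simp add: clinear_add[OF T] cinner_add_left cinner_add_right)
  then have sym: "d y x = - d x y" for x y
    using diag by (simp add: eq_neg_iff_add_eq_0)
  have "d x (scaleC \<i> y) = \<i> * d x y" "d (scaleC \<i> y) x = - \<i> * d y x" for x y
    unfolding d_def by (simp_all add: clinear_scaleC[OF T] cinner_scaleC_left cinner_scaleC_right algebra_simps)
  then have "\<i> * (2 * d x y) = 0" for x y
    using sym[of x "scaleC \<i> y"] sym[of x y] by (simp add: algebra_simps)
  then have "d x y = 0" for x y
    by simp
  then show ?thesis
    by (simp add: hermitian_def d_def)
qed

lemma nonneg_quadratic_imp_le:
  fixes a b m :: real
  assumes quad: "\<And>t. 0 \<le> a - 2 * t * m + t\<^sup>2 * m * b" and "0 \<le> m" "0 \<le> b"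
  shows "m \<le> a * b"
proof (cases "b = 0")
  case True
  have "0 \<le> a - 2 * ((a + 1) / (2 * m)) * m"
    using quad[of "(a + 1) / (2 * m)"] True by simp
  then show ?thesis
    using True \<open>0 \<le> m\<close> by (cases "m = 0") (simp_all add: field_simps)
next
  case False
  then have "b > 0"
    using \<open>0 \<le> b\<close> by simp
  have "0 \<le> a - 2 * (1 / b) * m + (1 / b)\<^sup>2 * m * b"
    by (rule quad)
  also have "\<dots> = (a * b - m) / b"
    using \<open>b > 0\<close> by (simp add: field_simps power2_eq_square)
  finally show ?thesis
    using \<open>b > 0\<close> by (simp add: zero_le_divide_iff)
qed

lemma positive_form_cauchy_schwarz:
  assumes T: "clinear T" "hermitian T" "positive_op T"
  shows "(cmod (cinner u (T v)))\<^sup>2 \<le> Re (cinner u (T u)) * Re (cinner v (T v))"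
proof -
  define w where "w = cinner u (T v)"
  have vu: "cinner v (T u) = cnj w"
    using T(2) cinner_conj unfolding w_def by (metis hermitianD)
  have ww: "w * cnj w = complex_of_real ((cmod w)\<^sup>2)"
    by (rule complex_norm_square[symmetric])
  have "0 \<le> Re (cinner u (T u)) - 2 * t * (cmod w)\<^sup>2 + t\<^sup>2 * (cmod w)\<^sup>2 * Re (cinner v (T v))" for t :: real
  proof -
    define s where "s = complex_of_real t * cnj w"
    define z where "z = u - scaleC s v"
    have "cinner z (T z) = cinner u (T u) - s * w - cnj s * cnj w + cnj s * s * cinner v (T v)"
      unfolding z_def
      by (simp add: clinear_diff[OF T(1)] clinear_scaleC[OF T(1)] cinner_left.diff cinner_right.diff
          cinner_scaleC_left          cinner_scaleC_right vu w_def[symmetric] algebra_simps)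
    also have "\<dots> = cinner u (T u) - 2 * complex_of_real t * (w * cnj w)
        + (complex_of_real t)\<^sup>2 * (w * cnj w) * cinner v (T v)"
      unfolding s_def by (simp add: power2_eq_square algebra_simps)
    finally show ?thesis
      using positive_opD[OF T(3), of z] by (simp add: ww del: of_real_power)
  qed
  then have "(cmod w)\<^sup>2 \<le> Re (cinner u (T u)) * Re (cinner v (T v))"
    by (rule nonneg_quadratic_imp_le) (simp_all add: positive_opD[OF T(3)])
  then show ?thesis
    unfolding w_def .
qed

lemma cinner_cauchy_schwarz: "cmod (cinner x y) \<le> norm x * norm (y::'a::complex_inner)"
proof -
  have "(cmod (cinner x y))\<^sup>2 \<le> (norm x * norm y)\<^sup>2"
    using positive_form_cauchy_schwarz[of "\<lambda>x. x" x y]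
    by (simp add: clinear_def hermitian_def positive_op_def cinner_Re_nonneg norm_sq_cinner
        power_mult_distrib)
  then show ?thesis
    by (rule power2_le_imp_le) simp
qed

lemma bounded_linear_scaleC: "bounded_linear (\<lambda>x::'a::complex_inner. scaleC c x)"
  by (rule bounded_linear_intro[where K="cmod c"])
    (simp_all add: scaleC_add_right scaleC_scaleR_commute norm_scaleC)

lemma bounded_linear_cinner_left: "bounded_linear (\<lambda>x::'a::complex_inner. cinner x y)"
  by (rule bounded_linear_intro[where K="norm y"])
    (simp_all add: cinner_add_left cinner_scaleR_left scaleR_conv_of_real cinner_cauchy_schwarz)

lemma bounded_linear_cinner_right: "bounded_linear (\<lambda>y::'a::complex_inner. cinner x y)"
  by (rule bounded_linear_intro[where K="norm x"])
    (simp_all add: cinner_add_right cinner_scaleR_right scaleR_conv_of_real,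
      metis cinner_cauchy_schwarz mult.commute)

lemma bounded_clinear_iff: "bounded_clinear f \<longleftrightarrow> clinear f \<and> bounded_linear f"
proof
  assume "bounded_clinear f"
  then obtain C where "clinear f" "\<And>x. norm (f x) \<le> norm x * C"
    unfolding bounded_clinear_def by blast
  then show "clinear f \<and> bounded_linear f"
    by (auto intro!: bounded_linear_intro[where K=C] simp: clinear_add clinear_scaleR)
qed (auto simp: bounded_clinear_def dest: bounded_linear.bounded)

lemma bounded_clinearI: "clinear f \<Longrightarrow> (\<And>x. norm (f x) \<le> norm x * C) \<Longrightarrow> bounded_clinear f"
  unfolding bounded_clinear_def by blast

lemma bounded_clinear_clinear: "bounded_clinear f \<Longrightarrow> clinear f"
  by (simp add: bounded_clinear_def)

lemma bounded_clinear_ident: "bounded_clinear (\<lambda>x. x)"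
  by (simp add: bounded_clinear_iff clinear_def bounded_linear_ident)

lemma bounded_clinear_zero: "bounded_clinear (\<lambda>x. 0)"
  by (simp add: bounded_clinear_iff clinear_def)

lemma bounded_clinear_compose:
  "bounded_clinear f \<Longrightarrow> bounded_clinear g \<Longrightarrow> bounded_clinear (\<lambda>x. f (g x))"
  by (simp add: bounded_clinear_iff clinear_def bounded_linear_compose)

lemma bounded_clinear_add:
  "bounded_clinear f \<Longrightarrow> bounded_clinear g \<Longrightarrow> bounded_clinear (\<lambda>x. f x + g x)"
  by (auto simp: bounded_clinear_iff clinear_def scaleC_add_right intro: bounded_linear_add)

lemma bounded_clinear_diff:
  "bounded_clinear f \<Longrightarrow> bounded_clinear g \<Longrightarrow> bounded_clinear (\<lambda>x. f x - g x)"
  by (auto simp: bounded_clinear_iff clinear_def scaleC_right.diff intro: bounded_linear_sub)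

lemma bounded_clinear_sum:
  "(\<And>i. i \<in> I \<Longrightarrow> bounded_clinear (f i)) \<Longrightarrow> bounded_clinear (\<lambda>x. \<Sum>i\<in>I. f i x)"
  by (induct I rule: infinite_finite_induct) (simp_all add: bounded_clinear_zero bounded_clinear_add)

lemma bounded_clinear_scaleR: "bounded_clinear f \<Longrightarrow> bounded_clinear (\<lambda>x. r *\<^sub>R f x)"
  by (simp add: bounded_clinear_iff clinear_def scaleC_scaleR_commute scaleR_add_right
      bounded_linear_scaleR_right bounded_linear_compose[of "scaleR r"])

lemma scaleC_vec_nth [simp]: "scaleC c v $ i = scaleC c (v $ i)"
  by (simp add: scaleC_vec_def)

lemma bounded_linear_vecI:
  fixes f :: "'a::real_normed_vector \<Rightarrow> 'b::real_normed_vector ^ 'i::finite"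
  assumes "\<And>i. bounded_linear (\<lambda>x. f x $ i)"
  shows "bounded_linear f"
proof -
  obtain K where K: "\<And>i x. norm (f x $ i) \<le> norm x * K i"
    using bounded_linear.bounded[OF assms] by metis
  show ?thesis
  proof (rule bounded_linear_intro[where K="\<Sum>i\<in>UNIV. K i"])
    show "f (x + y) = f x + f y" for x y
      by (simp add: vec_eq_iff linear_add[OF bounded_linear.linear[OF assms]])
    show "f (r *\<^sub>R x) = r *\<^sub>R f x" for r x
      by (simp add: vec_eq_iff linear_scale[OF bounded_linear.linear[OF assms]])
    have "norm (f x) \<le> (\<Sum>i\<in>UNIV. norm (f x $ i))" for x
      unfolding norm_vec_def by (rule L2_set_le_sum) simp
    also have "\<dots> x \<le> (\<Sum>i\<in>UNIV. norm x * K i)" for x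
      by (rule sum_mono) (rule K)
    finally show "norm (f x) \<le> norm x * (\<Sum>i\<in>UNIV. K i)" for x
      by (simp add: sum_distrib_left)
  qed
qed

lemma bounded_clinear_vecI:
  fixes f :: "'a::complex_inner \<Rightarrow> 'b::complex_inner ^ 'i::finite"
  assumes "\<And>i. bounded_clinear (\<lambda>x. f x $ i)"
  shows "bounded_clinear f"
  using assms unfolding bounded_clinear_iff clinear_def
  by (simp add: vec_eq_iff bounded_linear_vecI)

lemma bounded_clinear_vec_nth: "bounded_clinear (\<lambda>v. v $ i)"
  by (simp add: bounded_clinear_iff clinear_def bounded_linear_vec_nth)

lemma bounded_clinear_axis: "bounded_clinear (axis i)"
proof (rule bounded_clinear_vecI)
  show "bounded_clinear (\<lambda>x. axis i x $ j)" for j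
    by (cases "j = i") (simp_all add: axis_def bounded_clinear_ident bounded_clinear_zero)
qed

lemma cinner_axis_left: "cinner (axis i x) v = cinner x (v $ i)"
proof -
  have "cinner (axis i x $ j) (v $ j) = (if j = i then cinner x (v $ i) else 0)" for j
    by (simp add: axis_def)
  then show ?thesis
    by (simp add: cinner_vec_def)
qed

lemma cinner_axis_right: "cinner v (axis i x) = cinner (v $ i) x"
  using cinner_axis_left cinner_conj by metis

lemma sum_axis_nth: "(\<Sum>i\<in>UNIV. axis i (v $ i)) = v"
  by (simp add: vec_eq_iff axis_def if_distrib cong: if_cong)

lemma is_cadjoint_unique: "is_cadjoint T S \<Longrightarrow> is_cadjoint T S' \<Longrightarrow> S = S'"
  unfolding is_cadjoint_def by (metis cinner_eqI ext)

lemma cadjoint_eqI: "is_cadjoint T S \<Longrightarrow> cadjoint T = S"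
  unfolding cadjoint_def by (metis is_cadjoint_unique someI_ex)

lemma cadjoint_axis: "cadjoint (axis i :: 'a::complex_inner \<Rightarrow> 'a ^ 'i::finite) = (\<lambda>v. v $ i)"
  by (rule cadjoint_eqI) (simp add: is_cadjoint_def cinner_axis_left)

lemma is_isometry_axis: "is_isometry (axis i :: 'a::complex_inner \<Rightarrow> 'a ^ 'i::finite)"
  by (simp add: is_isometry_def bounded_clinear_axis norm_cinner cinner_axis_left)

section \<open>Square roots of positive operators\<close>

text \<open>The coefficients of the power series \<open>1 - sqrt (1 - t) = t/2 + t\<^sup>2/8 + \<dots>\<close>, determined by
  \<open>f\<^sup>2 = 2 f - t\<close>.\<close>
fun sqrt_coeff :: "nat \<Rightarrow> real" where
  "sqrt_coeff n = (if n = 0 then 0 else if n = 1 then 1/2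
     else (\<Sum>i\<in>{1..<n}. sqrt_coeff i * sqrt_coeff (n - i)) / 2)"

declare sqrt_coeff.simps [simp del]

lemma sqrt_coeff_0 [simp]: "sqrt_coeff 0 = 0"
  and sqrt_coeff_1 [simp]: "sqrt_coeff (Suc 0) = 1/2"
  by (simp_all add: sqrt_coeff.simps)

lemma sqrt_coeff_nonneg: "0 \<le> sqrt_coeff n"
proof (induct n rule: less_induct)
  case (less n)
  then show ?case
    by (subst sqrt_coeff.simps) (auto intro!: sum_nonneg)
qed

lemma sqrt_coeff_convolution:
  "(\<Sum>i\<le>k. sqrt_coeff i * sqrt_coeff (k - i)) = 2 * sqrt_coeff k - (if k = 1 then 1 else 0)"
proof -
  consider "k = 0" | "k = 1" | "k \<ge> 2"
    by linarith
  then show ?thesis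
  proof cases
    case 3
    then have "{..k} = insert 0 (insert k {1..<k})"
      by auto
    with 3 show ?thesis
      by (subst (2) sqrt_coeff.simps) simp
  qed simp_all
qed

lemma sqrt_coeff_triangle_sum:
  fixes f :: "nat \<Rightarrow> 'a::real_vector"
  assumes "N \<ge> 2"
  shows "(\<Sum>(i, j)\<in>{(i, j). i + j < N}. (sqrt_coeff i * sqrt_coeff j) *\<^sub>R f (i + j))
    = 2 *\<^sub>R (\<Sum>k<N. sqrt_coeff k *\<^sub>R f k) - f 1"
proof -
  have "(\<Sum>(i, j)\<in>{(i, j). i + j < N}. (sqrt_coeff i * sqrt_coeff j) *\<^sub>R f (i + j))
      = (\<Sum>k<N. \<Sum>i\<le>k. (sqrt_coeff i * sqrt_coeff (k - i)) *\<^sub>R f (i + (k - i)))"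
    by (rule sum.triangle_reindex)
  also have "\<dots> = (\<Sum>k<N. (\<Sum>i\<le>k. sqrt_coeff i * sqrt_coeff (k - i)) *\<^sub>R f k)"
    by (auto simp: scaleR_sum_left intro!: sum.cong)
  also have "\<dots> = (\<Sum>k<N. 2 *\<^sub>R (sqrt_coeff k *\<^sub>R f k)) - (\<Sum>k<N. if k = 1 then f k else 0)"
    by (simp add: sqrt_coeff_convolution scaleR_diff_left sum_subtractf if_distrib[of "\<lambda>c. c *\<^sub>R _"]
        cong: if_cong)
  also have "(\<Sum>k<N. if k = 1 then f k else 0) = f 1"
    using assms by simp
  finally show ?thesis
    by (simp add: scaleR_sum_right)
qed

definition sqrt_coeff_psum :: "nat \<Rightarrow> real" where
  "sqrt_coeff_psum N = (\<Sum>k<N. sqrt_coeff k)"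

lemma sqrt_coeff_psum_square:
  "(sqrt_coeff_psum N)\<^sup>2 = (\<Sum>(i, j)\<in>{..<N} \<times> {..<N}. sqrt_coeff i * sqrt_coeff j)"
  by (simp add: sqrt_coeff_psum_def power2_eq_square sum_product sum.cartesian_product)

lemma finite_triangle: "finite {(i, j). i + j < (N::nat)}"
  by (rule finite_subset[of _ "{..N} \<times> {..N}"]) auto

lemma triangle_sum_le_psum_square:
  "(\<Sum>(i, j)\<in>{(i, j). i + j < Suc N}. sqrt_coeff i * sqrt_coeff j) \<le> (sqrt_coeff_psum N)\<^sup>2"
proof -
  let ?T = "{(i, j). i + j < Suc N}" and ?S = "{..<N} \<times> {..<N}"
  have "i < N \<and> j < N" if "i + j < Suc N" "sqrt_coeff i \<noteq> 0" "sqrt_coeff j \<noteq> 0" for i j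
    using that by (cases "i = 0 \<or> j = 0") auto
  then have "(\<Sum>(i, j)\<in>?T. sqrt_coeff i * sqrt_coeff j)
      = (\<Sum>(i, j)\<in>?T \<inter> ?S. sqrt_coeff i * sqrt_coeff j)"
    by (intro sum.mono_neutral_right[OF finite_triangle]) auto
  also have "\<dots> \<le> (\<Sum>(i, j)\<in>?S. sqrt_coeff i * sqrt_coeff j)"
    by (rule sum_mono2) (auto intro!: mult_nonneg_nonneg sqrt_coeff_nonneg)
  finally show ?thesis
    by (simp add: sqrt_coeff_psum_square)
qed

lemma psum_square_le_triangle_sum:
  "(sqrt_coeff_psum M)\<^sup>2 \<le> (\<Sum>(i, j)\<in>{(i, j). i + j < 2 * M}. sqrt_coeff i * sqrt_coeff j)"
  unfolding sqrt_coeff_psum_square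
  by (rule sum_mono2[OF finite_triangle]) (auto intro!: mult_nonneg_nonneg sqrt_coeff_nonneg)

lemma sqrt_coeff_psum_nonneg: "0 \<le> sqrt_coeff_psum N"
  by (simp add: sqrt_coeff_psum_def sum_nonneg sqrt_coeff_nonneg)

text \<open>The partial sums satisfy \<open>2 s\<^sub>N\<^sub>+\<^sub>1 - 1 \<le> s\<^sub>N\<^sup>2\<close>, which keeps them below \<open>1\<close>.\<close>
lemma sqrt_coeff_psum_le_1: "sqrt_coeff_psum N \<le> 1"
proof (induct N)
  case (Suc N)
  show ?case
  proof (cases "N = 0")
    case False
    then have "2 * sqrt_coeff_psum (Suc N) - 1 \<le> (sqrt_coeff_psum N)\<^sup>2"
      using sqrt_coeff_triangle_sum[of "Suc N" "\<lambda>_. 1::real"] triangle_sum_le_psum_square[of N]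
      by (simp add: sqrt_coeff_psum_def real_scaleR_def)
    moreover have "(sqrt_coeff_psum N)\<^sup>2 \<le> 1"
      using Suc sqrt_coeff_psum_nonneg[of N] by (simp add: power_le_one)
    ultimately show ?thesis
      by simp
  qed (simp add: sqrt_coeff_psum_def)
qed (simp add: sqrt_coeff_psum_def)

lemma summable_sqrt_coeff: "summable sqrt_coeff"
  using sqrt_coeff_psum_le_1 sqrt_coeff_nonneg unfolding sqrt_coeff_psum_def
  by (intro summableI_nonneg_bounded) auto

lemma psum_square_gap_tendsto: "(\<lambda>M. (sqrt_coeff_psum (2 * M))\<^sup>2 - (sqrt_coeff_psum M)\<^sup>2) \<longlonglongrightarrow> 0"
proof -
  have lim: "sqrt_coeff_psum \<longlonglongrightarrow> suminf sqrt_coeff"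
    unfolding sqrt_coeff_psum_def using summable_sqrt_coeff by (rule summable_LIMSEQ)
  have "strict_mono (\<lambda>M::nat. 2 * M)"
    by (rule strict_monoI) simp
  then have "(\<lambda>M. sqrt_coeff_psum (2 * M)) \<longlonglongrightarrow> suminf sqrt_coeff"
    using LIMSEQ_subseq_LIMSEQ[OF lim] by (simp add: o_def)
  then have "(\<lambda>M. (sqrt_coeff_psum (2 * M))\<^sup>2 - (sqrt_coeff_psum M)\<^sup>2)
      \<longlonglongrightarrow> (suminf sqrt_coeff)\<^sup>2 - (suminf sqrt_coeff)\<^sup>2"
    by (intro tendsto_intros lim)
  then show ?thesis
    by simp
qed

subclass (in chilbert_space) banach ..

locale hermitian_contraction =
  fixes B :: "'a::chilbert_space \<Rightarrow> 'a"
  assumes clinear: "clinear B" and hermitian: "hermitian B" and norm_le: "norm (B x) \<le> norm x"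
begin

lemma clinear_power: "clinear (B ^^ k)"
  by (induct k) (simp_all add: clinear_def clinear_add[OF clinear] clinear_scaleC[OF clinear])

lemma hermitian_power: "hermitian (B ^^ k)"
  by (induct k) (simp_all add: hermitian_def hermitianD[OF hermitian] funpow_swap1)

lemma norm_power_le: "norm ((B ^^ k) x) \<le> norm x"
  by (induct k) (auto intro: order_trans[OF norm_le])

text \<open>\<open>Y = 1 - sqrt (1 - B)\<close>\<close>
definition Y_partial :: "nat \<Rightarrow> 'a \<Rightarrow> 'a" where
  "Y_partial N x = (\<Sum>k<N. sqrt_coeff k *\<^sub>R (B ^^ k) x)"

definition Y :: "'a \<Rightarrow> 'a" where
  "Y x = (\<Sum>k. sqrt_coeff k *\<^sub>R (B ^^ k) x)"

lemma norm_Y_term_le: "norm (sqrt_coeff k *\<^sub>R (B ^^ k) x) \<le> sqrt_coeff k * norm x"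
  using norm_power_le[of k x] sqrt_coeff_nonneg[of k] by (simp add: mult_left_mono)

lemma summable_Y: "summable (\<lambda>k. sqrt_coeff k *\<^sub>R (B ^^ k) x)"
  by (rule summable_comparison_test'[OF summable_mult2[OF summable_sqrt_coeff] norm_Y_term_le])

lemma Y_partial_tendsto: "(\<lambda>N. Y_partial N x) \<longlonglongrightarrow> Y x"
  unfolding Y_partial_def Y_def using summable_Y by (rule summable_LIMSEQ)

lemma norm_Y_partial_le: "norm (Y_partial N x) \<le> norm x"
proof -
  have "norm (Y_partial N x) \<le> (\<Sum>k<N. sqrt_coeff k * norm x)"
    unfolding Y_partial_def by (rule order_trans[OF norm_sum sum_mono]) (rule norm_Y_term_le)
  also have "\<dots> = sqrt_coeff_psum N * norm x"
    by (simp add: sqrt_coeff_psum_def sum_distrib_right)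
  also have "\<dots> \<le> norm x"
    using sqrt_coeff_psum_le_1 sqrt_coeff_psum_nonneg by (simp add: mult_left_le_one_le)
  finally show ?thesis .
qed

lemma norm_Y_le: "norm (Y x) \<le> norm x"
  by (rule LIMSEQ_le_const2[OF tendsto_norm[OF Y_partial_tendsto]]) (use norm_Y_partial_le in blast)

lemma clinear_Y_partial: "clinear (Y_partial N)"
  unfolding clinear_def Y_partial_def
  by (simp add: clinear_add[OF clinear_power] clinear_scaleC[OF clinear_power] scaleR_add_right
      sum.distrib scaleC_right.sum scaleC_scaleR_commute)

lemma clinear_Y: "clinear Y"
  unfolding clinear_def Y_def
  by (simp add: clinear_add[OF clinear_power] clinear_scaleC[OF clinear_power] scaleR_add_right
      suminf_add[OF summable_Y summable_Y] bounded_linear.suminf[OF bounded_linear_scaleC summable_Y]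
      scaleC_scaleR_commute)

lemma hermitian_Y: "hermitian Y"
  unfolding hermitian_def
proof (intro allI)
  fix x y
  have "cinner (Y x) y = (\<Sum>k. cinner (sqrt_coeff k *\<^sub>R (B ^^ k) x) y)"
    unfolding Y_def by (rule bounded_linear.suminf[OF bounded_linear_cinner_left summable_Y])
  also have "\<dots> = (\<Sum>k. cinner x (sqrt_coeff k *\<^sub>R (B ^^ k) y))"
    by (simp add: cinner_scaleR_left cinner_scaleR_right hermitianD[OF hermitian_power])
  also have "\<dots> = cinner x (Y y)"
    unfolding Y_def by (rule bounded_linear.suminf[OF bounded_linear_cinner_right summable_Y, symmetric])
  finally show "cinner (Y x) y = cinner x (Y y)" .
qed

lemma Y_partial_square:
  "Y_partial N (Y_partial N x)
    = (\<Sum>(i, j)\<in>{..<N} \<times> {..<N}. (sqrt_coeff i * sqrt_coeff j) *\<^sub>R (B ^^ (i + j)) x)"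
  unfolding Y_partial_def
  by (simp add: clinear_sum[OF clinear_power] clinear_scaleR[OF clinear_power] scaleR_sum_right
      funpow_add sum.cartesian_product)

text \<open>The terms with \<open>i + j < 2 M\<close> of the squared partial sum add up to exactly
  \<open>2 Y\<^sub>2\<^sub>M - B\<close>; all other terms have \<open>i \<ge> M\<close> or \<open>j \<ge> M\<close>.\<close>
lemma Y_partial_square_gap:
  assumes "M \<ge> 1"
  shows "norm (Y_partial (2 * M) (Y_partial (2 * M) x) - (2 *\<^sub>R Y_partial (2 * M) x - B x))
    \<le> ((sqrt_coeff_psum (2 * M))\<^sup>2 - (sqrt_coeff_psum M)\<^sup>2) * norm x"
proof -
  let ?S = "{..<2 * M} \<times> {..<2 * M}" and ?T = "{(i, j). i + j < 2 * M}"
  define g where "g = (\<lambda>(i, j). (sqrt_coeff i * sqrt_coeff j) *\<^sub>R (B ^^ (i + j)) x)"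
  define c where "c = (\<lambda>(i, j). sqrt_coeff i * sqrt_coeff j)"
  have sub: "?T \<subseteq> ?S"
    by auto
  have "2 *\<^sub>R Y_partial (2 * M) x - B x = sum g ?T"
    using sqrt_coeff_triangle_sum[of "2 * M" "\<lambda>k. (B ^^ k) x"] assms
    by (simp add: g_def Y_partial_def)
  then have "Y_partial (2 * M) (Y_partial (2 * M) x) - (2 *\<^sub>R Y_partial (2 * M) x - B x) = sum g (?S - ?T)"
    by (simp add: Y_partial_square g_def[symmetric] sum.subset_diff[OF sub])
  also have "norm \<dots> \<le> (\<Sum>p\<in>?S - ?T. c p * norm x)"
    by (rule order_trans[OF norm_sum sum_mono])
      (auto simp: g_def c_def sqrt_coeff_nonneg intro!: mult_left_mono norm_power_le)
  also have "\<dots> = (sum c ?S - sum c ?T) * norm x"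
    by (simp add: sum_distrib_right sum.subset_diff[OF sub])
  also have "\<dots> \<le> ((sqrt_coeff_psum (2 * M))\<^sup>2 - (sqrt_coeff_psum M)\<^sup>2) * norm x"
    using psum_square_le_triangle_sum[of M]
    by (intro mult_right_mono) (simp_all add: c_def sqrt_coeff_psum_square)
  finally show ?thesis .
qed

lemma Y_partial_square_tendsto: "(\<lambda>N. Y_partial N (Y_partial N x)) \<longlonglongrightarrow> Y (Y x)"
proof -
  have bound: "norm (Y_partial N (Y_partial N x) - Y (Y x))
      \<le> norm (Y_partial N x - Y x) + norm (Y_partial N (Y x) - Y (Y x))" for N
  proof -
    have "Y_partial N (Y_partial N x) - Y (Y x) = Y_partial N (Y_partial N x - Y x) + (Y_partial N (Y x) - Y (Y x))"
      by (simp add: clinear_diff[OF clinear_Y_partial])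
    then show ?thesis
      by (simp only:) (rule order_trans[OF norm_triangle_ineq add_right_mono[OF norm_Y_partial_le]])
  qed
  have "(\<lambda>N. norm (Y_partial N x - Y x) + norm (Y_partial N (Y x) - Y (Y x))) \<longlonglongrightarrow> 0 + 0"
    by (intro tendsto_add Y_partial_tendsto[THEN LIM_zero, THEN tendsto_norm_zero])
  then have "(\<lambda>N. Y_partial N (Y_partial N x) - Y (Y x)) \<longlonglongrightarrow> 0"
    by (intro Lim_null_comparison[OF always_eventually, OF allI, OF bound]) simp
  then show ?thesis
    by (rule LIM_zero_cancel)
qed

lemma Y_square: "Y (Y x) = 2 *\<^sub>R Y x - B x"
proof -
  let ?sq = "\<lambda>M. Y_partial (2 * M) (Y_partial (2 * M) x)" and ?lin = "\<lambda>M. 2 *\<^sub>R Y_partial (2 * M) x - B x"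
  have "strict_mono (\<lambda>M::nat. 2 * M)"
    by (rule strict_monoI) simp
  note along_evens = LIMSEQ_subseq_LIMSEQ[OF _ this, unfolded o_def]
  have gap: "(\<lambda>M. ?sq M - ?lin M) \<longlonglongrightarrow> 0"
  proof (rule Lim_null_comparison)
    show "\<forall>\<^sub>F M in sequentially.
        norm (?sq M - ?lin M) \<le> ((sqrt_coeff_psum (2 * M))\<^sup>2 - (sqrt_coeff_psum M)\<^sup>2) * norm x"
      using Y_partial_square_gap by (intro eventually_sequentiallyI[of 1])
    show "(\<lambda>M. ((sqrt_coeff_psum (2 * M))\<^sup>2 - (sqrt_coeff_psum M)\<^sup>2) * norm x) \<longlonglongrightarrow> 0"
      using tendsto_mult_left_zero[OF psum_square_gap_tendsto] .
  qed
  have "?lin \<longlonglongrightarrow> 2 *\<^sub>R Y x - B x"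
    by (intro tendsto_intros along_evens[OF Y_partial_tendsto])
  then have "?sq \<longlonglongrightarrow> 2 *\<^sub>R Y x - B x"
    using gap by (rule Lim_transform)
  with along_evens[OF Y_partial_square_tendsto] show ?thesis
    by (rule LIMSEQ_unique)
qed

lemma sqrt_complement: "\<exists>R. bounded_clinear R \<and> hermitian R \<and> (\<forall>x. R (R x) = x - B x)"
proof (intro exI conjI allI)
  show "bounded_clinear (\<lambda>x. x - Y x)"
  proof (rule bounded_clinearI[where C=2])
    show "clinear (\<lambda>x. x - Y x)"
      by (simp add: clinear_def clinear_add[OF clinear_Y] clinear_scaleC[OF clinear_Y] scaleC_right.diff)
    show "norm (x - Y x) \<le> norm x * 2" for x
      using norm_triangle_ineq4[of x "Y x"] norm_Y_le[of x] by simp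
  qed
  show "hermitian (\<lambda>x. x - Y x)"
    by (simp add: hermitian_def cinner_left.diff cinner_right.diff hermitianD[OF hermitian_Y])
  show "(x - Y x) - Y (x - Y x) = x - B x" for x
    by (simp add: clinear_diff[OF clinear_Y] Y_square scaleR_2)
qed

end

lemma positive_contraction_norm_sq_le:
  assumes A: "clinear A" "hermitian A" "positive_op A" and contr: "\<And>x. norm (A x) \<le> norm x"
  shows "(norm (A x))\<^sup>2 \<le> Re (cinner x (A x))"
proof -
  have "((norm (A x))\<^sup>2)\<^sup>2 = (cmod (cinner (A x) (A x)))\<^sup>2"
    by (simp only: cinner_self norm_of_real abs_power2)
  also have "\<dots> \<le> Re (cinner (A x) (A (A x))) * Re (cinner x (A x))"
    by (rule positive_form_cauchy_schwarz[OF A])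
  also have "\<dots> \<le> (norm (A x))\<^sup>2 * Re (cinner x (A x))"
  proof (rule mult_right_mono)
    have "Re (cinner (A x) (A (A x))) \<le> norm (A x) * norm (A (A x))"
      by (rule order_trans[OF complex_Re_le_cmod cinner_cauchy_schwarz])
    also have "\<dots> \<le> (norm (A x))\<^sup>2"
      by (simp add: power2_eq_square mult_left_mono contr)
    finally show "Re (cinner (A x) (A (A x))) \<le> (norm (A x))\<^sup>2" .
  qed (rule positive_opD[OF A(3)])
  finally have le: "(norm (A x))\<^sup>2 * (norm (A x))\<^sup>2 \<le> (norm (A x))\<^sup>2 * Re (cinner x (A x))"
    by (simp only: power2_eq_square[of "(norm (A x))\<^sup>2"])
  show ?thesis
  proof (cases "A x = 0")
    case False
    then have "0 < (norm (A x))\<^sup>2"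
      by simp
    with le show ?thesis
      by (simp only: mult_le_cancel_left_pos)
  qed (simp add: positive_opD[OF A(3)])
qed

lemma positive_contraction_complement:
  assumes A: "clinear A" "hermitian A" "positive_op A" and contr: "\<And>x. norm (A x) \<le> norm x"
  shows "hermitian_contraction (\<lambda>x. x - A x)"
proof
  show "clinear (\<lambda>x. x - A x)"
    by (simp add: clinear_def clinear_add[OF A(1)] clinear_scaleC[OF A(1)] scaleC_right.diff)
  show "hermitian (\<lambda>x. x - A x)"
    by (simp add: hermitian_def cinner_left.diff cinner_right.diff hermitianD[OF A(2)])
  have "(norm (x - A x))\<^sup>2 = (norm x)\<^sup>2 - 2 * Re (cinner x (A x)) + (norm (A x))\<^sup>2" for x
    using hermitianD[OF A(2), of x x]
    by (simp add: norm_sq_cinner cinner_left.diff cinner_right.diff)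
  then have "(norm (x - A x))\<^sup>2 \<le> (norm x)\<^sup>2" for x
    using positive_contraction_norm_sq_le[OF A contr, of x] positive_opD[OF A(3), of x] by simp
  then show "norm (x - A x) \<le> norm x" for x
    by (rule power2_le_imp_le) simp
qed

lemma positive_contraction_sqrt:
  fixes A :: "'a::chilbert_space \<Rightarrow> 'a"
  assumes "clinear A" "hermitian A" "positive_op A" "\<And>x. norm (A x) \<le> norm x"
  shows "\<exists>R. bounded_clinear R \<and> hermitian R \<and> (\<forall>x. R (R x) = A x)"
  using hermitian_contraction.sqrt_complement[OF positive_contraction_complement[OF assms]] by simp

lemma positive_op_sqrt:
  fixes A :: "'a::chilbert_space \<Rightarrow> 'a"
  assumes A: "bounded_clinear A" "hermitian A" "positive_op A"
  shows "\<exists>R. bounded_clinear R \<and> hermitian R \<and> (\<forall>x. R (R x) = A x)"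
proof -
  obtain K where K: "K > 0" "\<And>x. norm (A x) \<le> norm x * K"
    using A(1) unfolding bounded_clinear_iff by (metis bounded_linear.pos_bounded)
  define A' where "A' x = (1 / K) *\<^sub>R A x" for x
  have "clinear A'"
    using clinear_add[OF bounded_clinear_clinear[OF A(1)]] clinear_scaleC[OF bounded_clinear_clinear[OF A(1)]]
    by (simp add: A'_def clinear_def scaleC_scaleR_commute scaleR_add_right)
  moreover have "hermitian A'"
    by (simp add: A'_def hermitian_def hermitianD[OF A(2)] cinner_scaleR_left cinner_scaleR_right)
  moreover have "positive_op A'"
    using A(3) K(1) by (simp add: A'_def positive_op_def cinner_scaleR_right)
  moreover have "norm (A' x) \<le> norm x" for x
    using K by (simp add: A'_def field_simps)
  ultimately obtain R' where R': "bounded_clinear R'" "hermitian R'" "\<And>x. R' (R' x) = A' x"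
    using positive_contraction_sqrt by metis
  show ?thesis
  proof (intro exI conjI allI)
    show "bounded_clinear (\<lambda>x. sqrt K *\<^sub>R R' x)"
      using R'(1) by (rule bounded_clinear_scaleR)
    show "hermitian (\<lambda>x. sqrt K *\<^sub>R R' x)"
      by (simp add: hermitian_def hermitianD[OF R'(2)] cinner_scaleR_left cinner_scaleR_right)
    show "sqrt K *\<^sub>R R' (sqrt K *\<^sub>R R' x) = A x" for x
      using K(1) by (simp add: clinear_scaleR[OF bounded_clinear_clinear[OF R'(1)]] R'(3) A'_def)
  qed
qed

section \<open>Block operators and the Halmos dilation\<close>

definition op_blocks :: "('k ^ 'x \<Rightarrow> 'k ^ 'x) \<Rightarrow> 'x::finite \<Rightarrow> 'x \<Rightarrow> 'k::zero \<Rightarrow> 'k" where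
  "op_blocks G a x k = G (axis x k) $ a"

lemma block_op_op_blocks:
  assumes "clinear G"
  shows "block_op (op_blocks G) = G"
proof
  fix v
  have "block_op (op_blocks G) v = (\<chi> a. G (\<Sum>x\<in>UNIV. axis x (v $ x)) $ a)"
    by (simp add: block_op_def op_blocks_def clinear_sum[OF assms])
  then show "block_op (op_blocks G) v = G v"
    by (simp add: sum_axis_nth)
qed

lemma bounded_clinear_op_blocks: "bounded_clinear G \<Longrightarrow> bounded_clinear (op_blocks G a x)"
  unfolding op_blocks_def
  by (intro bounded_clinear_compose[OF bounded_clinear_vec_nth]
      bounded_clinear_compose[of G, OF _ bounded_clinear_axis])

lemma op_blocks_adjoint: "hermitian G \<Longrightarrow> is_cadjoint (op_blocks G a x) (op_blocks G x a)"
  by (simp add: is_cadjoint_def op_blocks_def cinner_axis_left[symmetric] cinner_axis_right[symmetric]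
      hermitianD)

lemma block_unitary_op_blocks:
  "bounded_clinear G \<Longrightarrow> is_unitary G \<Longrightarrow> block_unitary (op_blocks G)"
  by (simp add: block_unitary_def bounded_clinear_op_blocks block_op_op_blocks bounded_clinear_clinear)

text \<open>\<open>('h ^ 'p option) ^ 'x\<close> is identified with \<open>'h ^ 'x \<oplus> ('h ^ 'p) ^ 'x\<close> by splitting off
  the coordinate \<open>None\<close>.\<close>
definition none_part :: "('h ^ 'p::finite option) ^ 'x::finite \<Rightarrow> 'h ^ 'x" where
  "none_part v = (\<chi> x. v $ x $ None)"

definition some_part :: "('h ^ 'p::finite option) ^ 'x::finite \<Rightarrow> ('h ^ 'p) ^ 'x" where
  "some_part v = (\<chi> x. \<chi> p. v $ x $ Some p)"

definition join_parts :: "'h ^ 'x::finite \<Rightarrow> ('h ^ 'p::finite) ^ 'x \<Rightarrow> ('h ^ 'p option) ^ 'x" where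
  "join_parts a b = (\<chi> x. \<chi> i. case i of None \<Rightarrow> a $ x | Some p \<Rightarrow> b $ x $ p)"

lemma none_part_join [simp]: "none_part (join_parts a b) = a"
  and some_part_join [simp]: "some_part (join_parts a b) = b"
  by (simp_all add: none_part_def some_part_def join_parts_def vec_eq_iff)

lemma join_parts_nth_None [simp]: "join_parts a b $ x $ None = a $ x"
  by (simp add: join_parts_def)

lemma join_parts_split: "join_parts (none_part v) (some_part v) = v"
  by (simp add: none_part_def some_part_def join_parts_def vec_eq_iff split: option.split)

lemma none_part_axis_axis [simp]: "none_part (axis x (axis None h)) = axis x h"
  and some_part_axis_axis [simp]: "some_part (axis x (axis None h)) = 0"
  and some_part_axis_join [simp]: "some_part (axis x (join_parts 0 b $ y)) = axis x (b $ y)"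
  by (simp_all add: none_part_def some_part_def join_parts_def axis_def vec_eq_iff)

lemma sum_UNIV_option:
  fixes f :: "'a::finite option \<Rightarrow> 'b::comm_monoid_add"
  shows "(\<Sum>i\<in>UNIV. f i) = f None + (\<Sum>p\<in>UNIV. f (Some p))"
  unfolding UNIV_option_conv by (simp add: sum.reindex)

lemma cinner_parts:
  "cinner v w = cinner (none_part v) (none_part w) + cinner (some_part v) (some_part w)"
  by (simp add: cinner_vec_def none_part_def some_part_def sum_UNIV_option sum.distrib)

lemma bounded_clinear_none_part: "bounded_clinear none_part"
  unfolding none_part_def
  by (intro bounded_clinear_vecI)
    (simp add: bounded_clinear_compose[OF bounded_clinear_vec_nth bounded_clinear_vec_nth])

lemma bounded_clinear_some_part: "bounded_clinear some_part"
  unfolding some_part_def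
  by (intro bounded_clinear_vecI)
    (simp add: bounded_clinear_compose[OF bounded_clinear_vec_nth bounded_clinear_vec_nth])

lemma bounded_clinear_join_parts:
  assumes "bounded_clinear f" "bounded_clinear g"
  shows "bounded_clinear (\<lambda>v. join_parts (f v) (g v))"
proof (intro bounded_clinear_vecI)
  fix x i
  show "bounded_clinear (\<lambda>v. join_parts (f v) (g v) $ x $ i)"
    by (cases i) (simp_all add: assms join_parts_def bounded_clinear_compose[OF bounded_clinear_vec_nth]
        bounded_clinear_compose[OF bounded_clinear_vec_nth bounded_clinear_compose[OF bounded_clinear_vec_nth]])
qed

text \<open>For an isometry \<open>V\<close> with adjoint \<open>V\<^sup>*\<close>, the block matrix \<open>[[0, V\<^sup>*], [V, 1 - V V\<^sup>*]]\<close> is a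
  self-adjoint unitary.\<close>
definition halmos_dilation ::
  "('h::complex_inner ^ 'x::finite \<Rightarrow> ('h ^ 'p::finite) ^ 'x) \<Rightarrow> (('h ^ 'p) ^ 'x \<Rightarrow> 'h ^ 'x)
    \<Rightarrow> ('h ^ 'p option) ^ 'x \<Rightarrow> ('h ^ 'p option) ^ 'x"
  where "halmos_dilation V V' v =
    join_parts (V' (some_part v)) (V (none_part v) + some_part v - V (V' (some_part v)))"

context
  fixes V :: "'h::complex_inner ^ 'x::finite \<Rightarrow> ('h ^ 'p::finite) ^ 'x" and V'
  assumes adj: "is_cadjoint V V'" and bounded: "bounded_clinear V" "bounded_clinear V'"
    and iso: "\<And>w. V' (V w) = w"
begin

lemma halmos_dilation_involution: "halmos_dilation V V' (halmos_dilation V V' v) = v"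
proof -
  have "V' (some_part (halmos_dilation V V' v)) = none_part v"
    by (simp add: halmos_dilation_def clinear_add[OF bounded_clinear_clinear[OF bounded(2)]]
        clinear_diff[OF bounded_clinear_clinear[OF bounded(2)]] iso)
  then show ?thesis
    by (simp add: halmos_dilation_def join_parts_split)
qed

lemma hermitian_halmos_dilation: "hermitian (halmos_dilation V V')"
  unfolding hermitian_def
proof (intro allI)
  fix v w
  have "cinner (V a) b = cinner a (V' b)" "cinner b (V a) = cinner (V' b) a" for a b
    using adj cinner_conj unfolding is_cadjoint_def by metis+
  then show "cinner (halmos_dilation V V' v) w = cinner v (halmos_dilation V V' w)"
    by (simp add: halmos_dilation_def cinner_parts[of _ w] cinner_parts[of v] cinner_left.add
        cinner_right.add cinner_left.diff cinner_right.diff)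
qed

lemma bounded_clinear_halmos_dilation: "bounded_clinear (halmos_dilation V V')"
  unfolding halmos_dilation_def
  by (intro bounded_clinear_join_parts bounded_clinear_add bounded_clinear_diff bounded_clinear_some_part
      bounded_clinear_none_part bounded_clinear_compose[OF bounded(1)] bounded_clinear_compose[OF bounded(2)])

lemma unitary_halmos_dilation: "is_unitary (halmos_dilation V V')"
  unfolding is_unitary_def
  using bounded_clinear_halmos_dilation hermitian_halmos_dilation[THEN hermitian_is_cadjoint]
    halmos_dilation_involution
  by (auto simp: fun_eq_iff)

lemma halmos_dilation_corner:
  "op_blocks (halmos_dilation V V') x a (op_blocks (halmos_dilation V V') a' x' (axis None h)) $ None
    = V' (axis a (V (axis x' h) $ a')) $ x"
  using clinear_zero[OF bounded_clinear_clinear[OF bounded(1)]]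
    clinear_zero[OF bounded_clinear_clinear[OF bounded(2)]]
  by (simp add: op_blocks_def halmos_dilation_def)

end

section \<open>Stochastic operator matrices\<close>

definition pair_block_op ::
  "('x::finite \<Rightarrow> 'x \<Rightarrow> 'x \<Rightarrow> 'x \<Rightarrow> ('h::complex_inner \<Rightarrow> 'h)) \<Rightarrow> 'h ^ ('x \<times> 'x) \<Rightarrow> 'h ^ ('x \<times> 'x)"
  where "pair_block_op E \<xi> = (\<chi> p. \<Sum>(x', a')\<in>UNIV. E (fst p) x' (snd p) a' (\<xi> $ (x', a')))"

lemma sum_UNIV_prod: "(\<Sum>p\<in>UNIV. f p) = (\<Sum>a\<in>UNIV. \<Sum>b\<in>UNIV. f (a, b))"
  by (simp add: UNIV_Times_UNIV[symmetric] sum.cartesian_product del: UNIV_Times_UNIV)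

lemma pair_block_op_nth: "pair_block_op E \<xi> $ (x, a) = (\<Sum>x'\<in>UNIV. \<Sum>a'\<in>UNIV. E x x' a a' (\<xi> $ (x', a')))"
  by (simp add: pair_block_op_def sum_UNIV_prod)

lemma bounded_clinear_pair_block_op:
  assumes "\<And>x x' a a'. bounded_clinear (E x x' a a')"
  shows "bounded_clinear (pair_block_op E)"
proof (rule bounded_clinear_vecI)
  fix p :: "'a \<times> 'a"
  show "bounded_clinear (\<lambda>\<xi>. pair_block_op E \<xi> $ p)"
    by (cases p) (simp add: pair_block_op_nth bounded_clinear_sum
        bounded_clinear_compose[OF assms bounded_clinear_vec_nth])
qed

lemma cinner_pair_block_op:
  "cinner \<xi> (pair_block_op E \<xi>) = (\<Sum>x\<in>UNIV. \<Sum>x'\<in>UNIV. \<Sum>a\<in>UNIV. \<Sum>a'\<in>UNIV.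
     cinner (\<xi> $ (x, a)) (E x x' a a' (\<xi> $ (x', a'))))"
proof -
  have "cinner \<xi> (pair_block_op E \<xi>) = (\<Sum>x\<in>UNIV. \<Sum>a\<in>UNIV. \<Sum>x'\<in>UNIV. \<Sum>a'\<in>UNIV.
      cinner (\<xi> $ (x, a)) (E x x' a a' (\<xi> $ (x', a'))))"
    unfolding cinner_vec_def sum_UNIV_prod[where f="\<lambda>p. cinner (\<xi> $ p) (pair_block_op E \<xi> $ p)"]
    by (simp add: pair_block_op_nth cinner_right.sum)
  also have "\<dots> = (\<Sum>x\<in>UNIV. \<Sum>x'\<in>UNIV. \<Sum>a\<in>UNIV. \<Sum>a'\<in>UNIV.
      cinner (\<xi> $ (x, a)) (E x x' a a' (\<xi> $ (x', a'))))"
    by (rule sum.cong[OF refl], rule sum.swap)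
  finally show ?thesis .
qed

lemma positive_block_pair_block_op:
  assumes "positive_block E"
  shows "Im (cinner \<xi> (pair_block_op E \<xi>)) = 0" "0 \<le> Re (cinner \<xi> (pair_block_op E \<xi>))"
  using assms unfolding positive_block_def cinner_pair_block_op Let_def
  by (auto dest: spec[of _ "\<lambda>x a. \<xi> $ (x, a)"])

lemma stochastic_operator_matrix_bounded:
  "stochastic_operator_matrix E \<Longrightarrow> bounded_clinear (E x x' a a')"
  by (simp add: stochastic_operator_matrix_def)

lemma stochastic_operator_matrix_pair_block_op:
  assumes "stochastic_operator_matrix E"
  shows "bounded_clinear (pair_block_op E)" "hermitian (pair_block_op E)" "positive_op (pair_block_op E)"
proof -
  show bounded: "bounded_clinear (pair_block_op E)"
    using assms by (intro bounded_clinear_pair_block_op stochastic_operator_matrix_bounded)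
  have "positive_block E"
    using assms by (simp add: stochastic_operator_matrix_def)
  then show "hermitian (pair_block_op E)" "positive_op (pair_block_op E)"
    by (simp_all add: hermitian_if_real_quadratic_form bounded_clinear_clinear[OF bounded]
        positive_block_pair_block_op positive_op_def)
qed

definition embed_at :: "'x \<Rightarrow> 'h::zero ^ 'x::finite \<Rightarrow> 'h ^ ('x \<times> 'x)" where
  "embed_at a w = (\<chi> p. if snd p = a then w $ fst p else 0)"

definition slice_at :: "'x \<Rightarrow> 'h ^ ('x::finite \<times> 'x) \<Rightarrow> 'h ^ 'x" where
  "slice_at a \<xi> = (\<chi> x. \<xi> $ (x, a))"

lemma slice_at_nth [simp]: "slice_at a \<xi> $ x = \<xi> $ (x, a)"
  by (simp add: slice_at_def)

lemma embed_at_axis: "embed_at a (axis x h) = axis (x, a) h"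
  by (auto simp: embed_at_def axis_def vec_eq_iff)

lemma cinner_embed_at: "cinner (embed_at a w) \<xi> = cinner w (slice_at a \<xi>)"
proof -
  have "cinner (embed_at a w $ (x, b)) (\<xi> $ (x, b))
      = (if b = a then cinner (w $ x) (\<xi> $ (x, a)) else 0)" for x b
    by (simp add: embed_at_def)
  then show ?thesis
    unfolding cinner_vec_def sum_UNIV_prod[where f="\<lambda>p. cinner (embed_at a w $ p) (\<xi> $ p)"]
    by simp
qed

lemma bounded_clinear_embed_at: "bounded_clinear (embed_at a)"
proof (rule bounded_clinear_vecI)
  show "bounded_clinear (\<lambda>w. embed_at a w $ p)" for p
    by (cases "snd p = a") (simp_all add: embed_at_def bounded_clinear_vec_nth bounded_clinear_zero)
qed

lemma bounded_clinear_slice_at: "bounded_clinear (slice_at a)"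
  by (rule bounded_clinear_vecI) (simp add: bounded_clinear_vec_nth)

text \<open>\<open>dilation_map R w = (R (w \<otimes> e\<^sub>a))\<^sub>a\<close>, with \<open>embed_at a w = w \<otimes> e\<^sub>a\<close>.\<close>
definition dilation_map ::
  "('h ^ ('x \<times> 'x) \<Rightarrow> 'h ^ ('x \<times> 'x)) \<Rightarrow> 'h::zero ^ 'x::finite \<Rightarrow> ('h ^ ('x \<times> 'x)) ^ 'x"
  where "dilation_map R w = (\<chi> a. R (embed_at a w))"

definition dilation_map_adj ::
  "('h ^ ('x \<times> 'x) \<Rightarrow> 'h ^ ('x \<times> 'x)) \<Rightarrow> ('h::comm_monoid_add ^ ('x::finite \<times> 'x)) ^ 'x \<Rightarrow> 'h ^ 'x"
  where "dilation_map_adj R \<beta> = (\<Sum>a\<in>UNIV. slice_at a (R (\<beta> $ a)))"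

lemma dilation_map_adjoint:
  assumes "hermitian R"
  shows "is_cadjoint (dilation_map R) (dilation_map_adj R)"
  unfolding is_cadjoint_def
proof (intro allI)
  fix w \<beta>
  have "cinner (dilation_map R w) \<beta> = (\<Sum>a\<in>UNIV. cinner (embed_at a w) (R (\<beta> $ a)))"
    unfolding cinner_vec_def[of "dilation_map R w"] by (simp add: dilation_map_def hermitianD[OF assms])
  then show "cinner (dilation_map R w) \<beta> = cinner w (dilation_map_adj R \<beta>)"
    by (simp add: dilation_map_adj_def cinner_embed_at cinner_right.sum)
qed

lemma bounded_clinear_dilation_map: "bounded_clinear R \<Longrightarrow> bounded_clinear (dilation_map R)"
  unfolding dilation_map_def
  by (rule bounded_clinear_vecI) (simp add: bounded_clinear_compose[OF _ bounded_clinear_embed_at])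

lemma bounded_clinear_dilation_map_adj: "bounded_clinear R \<Longrightarrow> bounded_clinear (dilation_map_adj R)"
  unfolding dilation_map_adj_def
  by (intro bounded_clinear_sum bounded_clinear_compose[OF bounded_clinear_slice_at]
      bounded_clinear_compose[of R, OF _ bounded_clinear_vec_nth])

lemma pair_block_op_embed_at:
  assumes "\<And>x x' a a'. clinear (E x x' a a')"
  shows "pair_block_op E (embed_at b w) $ (x, a) = (\<Sum>x'\<in>UNIV. E x x' a b (w $ x'))"
  using clinear_zero[OF assms] by (simp add: pair_block_op_nth embed_at_def if_distrib cong: if_cong)

lemma dilation_map_isometry:
  assumes E: "stochastic_operator_matrix E" and R: "\<And>\<xi>. R (R \<xi>) = pair_block_op E \<xi>"
  shows "dilation_map_adj R (dilation_map R w) = w"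
proof -
  have "dilation_map_adj R (dilation_map R w) $ x = (\<Sum>a\<in>UNIV. \<Sum>x'\<in>UNIV. E x x' a a (w $ x'))" for x
    by (simp add: dilation_map_adj_def dilation_map_def R pair_block_op_embed_at
        stochastic_operator_matrix_bounded[OF E, THEN bounded_clinear_clinear])
  also have "\<dots> x = (\<Sum>x'\<in>UNIV. \<Sum>a\<in>UNIV. E x x' a a (w $ x'))" for x
    by (rule sum.swap)
  also have "\<dots> x = w $ x" for x
    using E by (simp add: stochastic_operator_matrix_def)
  finally show ?thesis
    by (simp add: vec_eq_iff)
qed

lemma dilation_map_adj_axis:
  assumes "clinear R"
  shows "dilation_map_adj R (axis a \<beta>) = slice_at a (R \<beta>)"
proof -
  have "slice_at b (R (axis a \<beta> $ b)) = (if b = a then slice_at a (R \<beta>) else 0)" for b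
    by (simp add: axis_def clinear_zero[OF assms] vec_eq_iff)
  then show ?thesis
    by (simp add: dilation_map_adj_def)
qed

lemma pair_block_op_axis:
  assumes "\<And>x x' a a'. clinear (E x x' a a')"
  shows "pair_block_op E (axis (x', a') h) $ (x, a) = E x x' a a' h"
proof -
  have "E x y a b (axis (x', a') h $ (y, b)) = (if b = a' then if y = x' then E x x' a a' h else 0 else 0)"
    for y b
    by (simp add: axis_def clinear_zero[OF assms])
  then show ?thesis
    by (simp add: pair_block_op_nth)
qed

lemma dilation_map_compression:
  assumes E: "stochastic_operator_matrix E"
    and R: "clinear R" "\<And>\<xi>. R (R \<xi>) = pair_block_op E \<xi>"
  shows "dilation_map_adj R (axis a (dilation_map R (axis x' h) $ a')) $ x = E x x' a a' h"
  by (simp add: dilation_map_adj_axis[OF R(1)] dilation_map_def embed_at_axis R(2)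
      pair_block_op_axis[OF stochastic_operator_matrix_bounded[OF E, THEN bounded_clinear_clinear]])

theorem mainTheorem19:
  fixes E :: "'x::finite \<Rightarrow> 'x \<Rightarrow> 'x \<Rightarrow> 'x \<Rightarrow> ('h::chilbert_space \<Rightarrow> 'h)"
  assumes "stochastic_operator_matrix E"
  shows "\<exists>(W :: 'h \<Rightarrow> 'h ^ (('x \<times> 'x) option))
           (U :: 'x \<Rightarrow> 'x \<Rightarrow> ('h ^ (('x \<times> 'x) option) \<Rightarrow> 'h ^ (('x \<times> 'x) option))).
           is_isometry W \<and> block_unitary U \<and>
           (\<forall>x x' a a'. E x x' a a' = cadjoint W \<circ> cadjoint (U a x) \<circ> U a' x' \<circ> W)"
proof -
  obtain R where R: "bounded_clinear R" "hermitian R" "\<And>\<xi>. R (R \<xi>) = pair_block_op E \<xi>"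
    using positive_op_sqrt[OF stochastic_operator_matrix_pair_block_op[OF assms]] by blast
  define G where "G = halmos_dilation (dilation_map R) (dilation_map_adj R)"
  note V = dilation_map_adjoint[OF R(2)] bounded_clinear_dilation_map[OF R(1)]
    bounded_clinear_dilation_map_adj[OF R(1)] dilation_map_isometry[OF assms R(3)]
  have G: "bounded_clinear G" "hermitian G" "is_unitary G"
    unfolding G_def using V
    by (rule bounded_clinear_halmos_dilation hermitian_halmos_dilation unitary_halmos_dilation)+
  have "E x x' a a' h = op_blocks G x a (op_blocks G a' x' (axis None h)) $ None" for x x' a a' h
    unfolding G_def halmos_dilation_corner[OF V]
    by (rule dilation_map_compression[OF assms bounded_clinear_clinear[OF R(1)] R(3), symmetric])
  then have "E x x' a a' = cadjoint (axis None) \<circ> cadjoint (op_blocks G a x) \<circ> op_blocks G a' x' \<circ> axis None"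
    for x x' a a'
    by (simp add: fun_eq_iff cadjoint_axis cadjoint_eqI[OF op_blocks_adjoint[OF G(2)]])
  then show ?thesis
    using is_isometry_axis block_unitary_op_blocks[OF G(1,3)] by blast
qed

end
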